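(* Let $d\ge1$. There is $\kappa>0$, depending only on $d$, such that the following holds. Let $N\ge1$ be an integer and $p\in(1-\kappa,1]$, and let $\tilde{\mathbb{P}}$ assign to each vertex $i$ of the graph $\Xi$ (defined in the context) a value $\eta(i)\in\{0,1\}$, independently, with $\tilde{\mathbb{P}}(\eta(i)=1)=p$. Then there are constants $\varphi>0$ and $c_1,c_2>0$, depending only on $p$ and $d$, such that \[ \tilde{\mathbb{P}}\bigl(T(x)<\varphi\|x\|\bigr)\le c_1e^{-c_2\|x\|}\qquad\text{for all }x\in\mathcal{A}. \]
   Context: $\mathcal{A}=\{(x_1,\dots,x_d)\in\mathbb{Z}^d:x_1+\dots+x_d\equiv0\pmod2\}$ is the even sublattice. $\Xi=\mathcal{A}\times\{0,\dots,N-1\}$ is a graph in which $(x,k)$ and $(y,\ell)$ are adjacent if either $x=y$ and $k=\ell\pm1$ (mod $N$), or $k=\ell$ and $x,y$ are next-nearest neighbours in $\mathbb{Z}^d$ (i.e. distinct points at graph distance 2 in $\mathbb{Z}^d$). For $x\in\mathcal{A}$, the passage time is $T(x)=\inf_\pi\sum_{i\in\pi}\eta(i)$, the infimum over all paths $\pi$ in $\Xi$ from $(0,0)$ to $(x,0)$. $\|x\|$ is the (Euclidean) norm. *)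

theory Defs
  imports "HOL-Probability.Probability"
begin

definition evenlat :: "nat \<Rightarrow> int list set" where
  "evenlat d = {x. length x = d \<and> even (sum_list x)}"

definition l1dist :: "int list \<Rightarrow> int list \<Rightarrow> int" where
  "l1dist x y = sum_list (map (\<lambda>(a, b). \<bar>a - b\<bar>) (zip x y))"

text \<open>Vertex set of the graph Xi = A x {0,...,N-1}.\<close>
definition Xi_V :: "nat \<Rightarrow> nat \<Rightarrow> (int list \<times> nat) set" where
  "Xi_V d N = evenlat d \<times> {..<N}"

definition Xi_adj :: "nat \<Rightarrow> int list \<times> nat \<Rightarrow> int list \<times> nat \<Rightarrow> bool" where
  "Xi_adj N i j = (case i of (x, k) \<Rightarrow> case j of (y, l) \<Rightarrow>
      (x = y \<and> (k = (l + 1) mod N \<or> l = (k + 1) mod N))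
    \<or> (k = l \<and> x \<noteq> y \<and> l1dist x y = 2))"

definition Xi_path :: "nat \<Rightarrow> nat \<Rightarrow> (int list \<times> nat) list \<Rightarrow> bool" where
  "Xi_path d N \<pi> = (\<pi> \<noteq> [] \<and> set \<pi> \<subseteq> Xi_V d N \<and>
      (\<forall>i. i + 1 < length \<pi> \<longrightarrow> Xi_adj N (\<pi> ! i) (\<pi> ! (i + 1))))"

text \<open>Passage time T(x): infimum over paths from (0,0) to (x,0) of the sum of eta
  over the vertices of the path; eta(i) = 1 iff the Boolean configuration is True at i.\<close>
definition passage_time ::
  "nat \<Rightarrow> nat \<Rightarrow> (int list \<times> nat \<Rightarrow> bool) \<Rightarrow> int list \<Rightarrow> real" where
  "passage_time d N \<eta> x = Inf {sum_list (map (\<lambda>i. if \<eta> i then 1 else 0) \<pi>) | \<pi>.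
      Xi_path d N \<pi> \<and> hd \<pi> = (replicate d 0, 0) \<and> last \<pi> = (x, 0)}"

definition eucl_norm :: "int list \<Rightarrow> real" where
  "eucl_norm x = sqrt (sum_list (map (\<lambda>a. (real_of_int a)\<^sup>2) x))"

definition config_measure :: "nat \<Rightarrow> nat \<Rightarrow> real \<Rightarrow> (int list \<times> nat \<Rightarrow> bool) measure" where
  "config_measure d N p = PiM (Xi_V d N) (\<lambda>_. measure_pmf (bernoulli_pmf p))"

end

theory Submission
  imports Defs
begin

text \<open>A passage time below \<open>\<parallel>x\<parallel>/4\<close> is realised by a self-avoiding path. Each step changes
  the \<open>\<ell>\<^sup>1\<close>-norm of the lattice coordinate by at most 2, so if \<open>\<ell>\<^sup>1(x) = 2m\<close> the path has more than
  \<open>m\<close> steps, and its first \<open>m + 1\<close> vertices form a walk from the origin on which at least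
  \<open>m div 2\<close> distinct sites carry the value 0. There are at most \<open>(5^d + 2)^m\<close> such walks and
  \<open>2^(m+1)\<close> vertex sets on each, while a fixed set of \<open>m div 2\<close> sites is all zero with
  probability \<open>(1 - p)^(m div 2)\<close>. For \<open>1 - p \<le> 1/(16 (5^d + 2)^2)\<close> this union bound is at most
  \<open>8 (5^d + 2) 2^-m\<close>, and \<open>m \<ge> \<parallel>x\<parallel>/2\<close>.\<close>

section \<open>The \<open>\<ell>\<^sup>1\<close>-norm on \<open>\<int>\<^sup>d\<close>\<close>

definition l1_norm :: "int list \<Rightarrow> int" where
  "l1_norm x = sum_list (map abs x)"

lemma l1_norm_simps [simp]: "l1_norm [] = 0" "l1_norm (a # x) = \<bar>a\<bar> + l1_norm x"
  by (simp_all add: l1_norm_def)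

lemma l1dist_simps [simp]: "l1dist [] y = 0" "l1dist (a # x) (b # y) = \<bar>a - b\<bar> + l1dist x y"
  by (simp_all add: l1dist_def)

lemma l1_norm_replicate_0 [simp]: "l1_norm (replicate n 0) = 0"
  by (induction n) auto

lemma l1dist_self [simp]: "l1dist x x = 0"
  by (induction x) auto

lemma l1_norm_nonneg: "0 \<le> l1_norm x"
  by (induction x) auto

lemma l1dist_nonneg: "0 \<le> l1dist x y"
  by (auto simp: l1dist_def intro!: sum_list_nonneg)

lemma l1_norm_le_add_l1dist: "length x = length y \<Longrightarrow> l1_norm y \<le> l1_norm x + l1dist x y"
  by (induction x y rule: list_induct2) auto

lemma abs_diff_le_l1dist:
  "length x = length y \<Longrightarrow> (a, b) \<in> set (zip x y) \<Longrightarrow> \<bar>a - b\<bar> \<le> l1dist x y"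
proof (induction x y rule: list_induct2)
  case (Cons u x v y)
  then show ?case
    using l1dist_nonneg[of x y] by auto
qed simp

lemma even_l1_norm_iff: "even (l1_norm x) \<longleftrightarrow> even (sum_list x)"
  by (induction x) (auto simp: abs_if)

lemma even_sum_list_add_l1dist:
  "length y = length z \<Longrightarrow> even (sum_list y + sum_list z + l1dist y z)"
proof (induction y z rule: list_induct2)
  case (Cons a y b z)
  have "even (a + b + \<bar>a - b\<bar>)"
    by (auto simp: abs_if)
  then have "even ((a + b + \<bar>a - b\<bar>) + (sum_list y + sum_list z + l1dist y z))"
    using Cons by simp
  then show ?case
    by (simp add: algebra_simps)
qed simp

lemma eucl_norm_nonneg: "0 \<le> eucl_norm x"
  by (auto simp: eucl_norm_def intro!: sum_list_nonneg)

lemma eucl_norm_le_l1_norm: "eucl_norm x \<le> l1_norm x"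
proof (induction x)
  case (Cons a x)
  have sq: "(eucl_norm x)\<^sup>2 = sum_list (map (\<lambda>a. (real_of_int a)\<^sup>2) x)"
    unfolding eucl_norm_def by (intro real_sqrt_pow2 sum_list_nonneg) auto
  have "eucl_norm (a # x) = sqrt ((real_of_int a)\<^sup>2 + (eucl_norm x)\<^sup>2)"
    by (simp add: eucl_norm_def[of "a # x"] sq)
  also have "\<dots> \<le> \<bar>real_of_int a\<bar> + eucl_norm x"
    using eucl_norm_nonneg[of x] by (intro real_le_lsqrt) (auto simp: power2_sum)
  also have "\<dots> \<le> l1_norm (a # x)"
    using Cons by simp
  finally show ?case .
qed (simp add: eucl_norm_def)

lemma rtranclp_imp_successively:
  "R\<^sup>*\<^sup>* u v \<Longrightarrow> \<exists>xs. xs \<noteq> [] \<and> hd xs = u \<and> last xs = v \<and> successively R xs"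
proof (induction rule: converse_rtranclp_induct)
  case base
  show ?case
    by (intro exI[of _ "[v]"]) simp
next
  case (step u w)
  then obtain xs where "xs \<noteq> []" "hd xs = w" "last xs = v" "successively R xs"
    by blast
  with step.hyps(1) show ?case
    by (intro exI[of _ "u # xs"]) (auto simp: successively_Cons)
qed

lemma successively_preserves:
  assumes "successively R xs" "xs \<noteq> []" "P (hd xs)" "\<And>a b. R a b \<Longrightarrow> P a \<Longrightarrow> P b"
  shows "\<forall>a\<in>set xs. P a"
  using assms(1-3)
proof (induction xs rule: induct_list012)
  case (3 x y xs)
  have "R x y" "successively R (y # xs)" "P x"
    using "3.prems" by simp_all
  then have "P y"
    using assms(4) by blast
  then have "\<forall>a\<in>set (y # xs). P a"
    by (intro "3.IH"(2)) (use \<open>successively R (y # xs)\<close> in simp_all)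
  with \<open>P x\<close> show ?case
    by simp
qed simp_all

lemma successively_last_le:
  fixes f :: "'a \<Rightarrow> int"
  assumes "successively R xs" "xs \<noteq> []"
    and "\<And>a b. a \<in> set xs \<Longrightarrow> b \<in> set xs \<Longrightarrow> R a b \<Longrightarrow> f b \<le> f a + c"
  shows "f (last xs) \<le> f (hd xs) + c * (int (length xs) - 1)"
  using assms
proof (induction xs rule: induct_list012)
  case (3 x y xs)
  have "R x y" "successively R (y # xs)"
    using "3.prems"(1) by simp_all
  have "f (last (y # xs)) \<le> f (hd (y # xs)) + c * (int (length (y # xs)) - 1)"
    by (rule "3.IH"(2)) (use \<open>successively R (y # xs)\<close> "3.prems"(3) in auto)
  moreover have "f y \<le> f x + c"
    using "3.prems"(3) \<open>R x y\<close> by simp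
  ultimately show ?case
    by (simp add: algebra_simps)
qed simp_all

lemma successively_distinct_sublist:
  assumes "successively R xs" "xs \<noteq> []"
  shows "\<exists>ys. ys \<noteq> [] \<and> distinct ys \<and> successively R ys \<and> hd ys = hd xs
    \<and> last ys = last xs \<and> set ys \<subseteq> set xs"
  using assms
proof (induction xs rule: induct_list012)
  case (3 x y xs)
  have "R x y" "successively R (y # xs)"
    using "3.prems"(1) by simp_all
  obtain ys where ys: "distinct ys" "successively R ys" "hd ys = y" "last ys = last (y # xs)"
      "set ys \<subseteq> set (y # xs)" "ys \<noteq> []"
    using "3.IH"(2)[OF \<open>successively R (y # xs)\<close>] by force
  show ?case
  proof (cases "x \<in> set ys")
    case True
    then obtain as bs where "ys = as @ x # bs"
      by (meson split_list)
    with ys show ?thesis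
      by (intro exI[of _ "x # bs"]) (auto simp: successively_append_iff)
  next
    case False
    with ys \<open>R x y\<close> show ?thesis
      by (intro exI[of _ "x # ys"]) (auto simp: successively_Cons)
  qed
qed (auto intro: exI[of _ "[_]"])

section \<open>Connectivity of the even sublattice\<close>

definition nn_adj :: "int list \<Rightarrow> int list \<Rightarrow> bool" where
  "nn_adj y z \<longleftrightarrow> length y = length z \<and> y \<noteq> z \<and> l1dist y z = 2"

lemma nn_adj_parity:
  assumes "nn_adj y z"
  shows "length y = length z" "even (sum_list y) \<longleftrightarrow> even (sum_list z)"
proof -
  have "even (sum_list y + sum_list z + l1dist y z)" "l1dist y z = 2" "length y = length z"
    using assms even_sum_list_add_l1dist by (auto simp: nn_adj_def)
  then show "length y = length z" "even (sum_list y) \<longleftrightarrow> even (sum_list z)"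
    by simp_all
qed

lemma nn_reach_Cons: "nn_adj\<^sup>*\<^sup>* u v \<Longrightarrow> nn_adj\<^sup>*\<^sup>* (a # u) (a # v)"
proof (induction rule: rtranclp_induct)
  case (step y z)
  then have "nn_adj (a # y) (a # z)"
    by (simp add: nn_adj_def)
  with step.IH show ?case
    by simp
qed simp

lemma nn_reach_head: "even (b - a) \<Longrightarrow> nn_adj\<^sup>*\<^sup>* (a # u) (b # u)"
proof -
  have steps: "nn_adj\<^sup>*\<^sup>* (a # u) ((a + 2 * int n) # u) \<and> nn_adj\<^sup>*\<^sup>* (a # u) ((a - 2 * int n) # u)" for n
  proof (induction n)
    case (Suc n)
    have "nn_adj ((a + 2 * int n) # u) ((a + 2 * int (Suc n)) # u)"
      "nn_adj ((a - 2 * int n) # u) ((a - 2 * int (Suc n)) # u)"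
      by (simp_all add: nn_adj_def)
    with Suc show ?case
      by (meson rtranclp.rtrancl_into_rtrancl)
  qed simp
  assume "even (b - a)"
  then obtain k where k: "b - a = 2 * k"
    by (meson dvdE)
  then have "b = a + 2 * int (nat k) \<or> b = a - 2 * int (nat (- k))"
    by linarith
  with steps show ?thesis
    by metis
qed

text \<open>The two parity classes have to be carried through the induction together.\<close>
lemma nn_reach_by_parity:
  "(even (sum_list y) \<longrightarrow> nn_adj\<^sup>*\<^sup>* (replicate (length y) 0) y) \<and>
   (odd (sum_list y) \<longrightarrow> nn_adj\<^sup>*\<^sup>* (1 # replicate (length y - 1) 0) y)"
proof (induction y)
  case (Cons a ys)
  have from_even: "nn_adj\<^sup>*\<^sup>* (c # replicate (length ys) 0) (a # ys)"
    if "even (sum_list ys)" "even (a - c)" for c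
    using Cons.IH that nn_reach_Cons nn_reach_head by (meson rtranclp_trans)
  have from_odd: "nn_adj\<^sup>*\<^sup>* (c # replicate (length ys) 0) (a # ys)"
    if odd_ys: "odd (sum_list ys)" and odd_diff: "odd (a - c)" for c
  proof -
    obtain y ys' where ys: "ys = y # ys'"
      using odd_ys by (cases ys) auto
    have "nn_adj (c # 0 # replicate (length ys') 0) ((c + 1) # 1 # replicate (length ys') 0)"
      by (simp add: nn_adj_def)
    moreover have "nn_adj\<^sup>*\<^sup>* ((c + 1) # 1 # replicate (length ys') 0) ((c + 1) # ys)"
      using Cons.IH odd_ys nn_reach_Cons ys by fastforce
    moreover have "nn_adj\<^sup>*\<^sup>* ((c + 1) # ys) (a # ys)"
      using odd_diff by (intro nn_reach_head) simp
    ultimately show ?thesis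
      using ys by (simp add: converse_rtranclp_into_rtranclp)
  qed
  show ?case
  proof (intro conjI impI)
    assume "even (sum_list (a # ys))"
    then show "nn_adj\<^sup>*\<^sup>* (replicate (length (a # ys)) 0) (a # ys)"
      using from_even[of 0] from_odd[of 0] by (cases "even a") simp_all
  next
    assume "odd (sum_list (a # ys))"
    moreover have "1 # replicate (length (a # ys) - 1) 0 = 1 # replicate (length ys) 0"
      by simp
    ultimately show "nn_adj\<^sup>*\<^sup>* (1 # replicate (length (a # ys) - 1) 0) (a # ys)"
      using from_even[of 1] from_odd[of 1] by (cases "even a") simp_all
  qed
qed simp

lemma evenlat_reachable: "x \<in> evenlat d \<Longrightarrow> nn_adj\<^sup>*\<^sup>* (replicate d 0) x"
  using nn_reach_by_parity by (auto simp: evenlat_def)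

lemma evenlat_l1_norm_eq_double:
  assumes "x \<in> evenlat d"
  obtains m where "l1_norm x = 2 * int m"
proof -
  have "even (l1_norm x)"
    using assms even_l1_norm_iff by (simp add: evenlat_def)
  then obtain k where "l1_norm x = 2 * k"
    by (rule evenE)
  with l1_norm_nonneg[of x] show ?thesis
    by (intro that[of "nat k"]) simp
qed

section \<open>Paths in \<open>\<Xi>\<close> and their cost\<close>

lemma Xi_path_iff: "Xi_path d N \<pi> \<longleftrightarrow> \<pi> \<noteq> [] \<and> set \<pi> \<subseteq> Xi_V d N \<and> successively (Xi_adj N) \<pi>"
  by (simp add: Xi_path_def successively_conv_nth)

lemma Xi_adj_cases:
  assumes "Xi_adj N v w" "v \<in> Xi_V d N" "w \<in> Xi_V d N"
  shows "(fst v = fst w \<and> (snd v = (snd w + 1) mod N \<or> snd w = (snd v + 1) mod N))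
    \<or> (snd v = snd w \<and> l1dist (fst v) (fst w) = 2 \<and> length (fst v) = d \<and> length (fst w) = d)"
  using assms by (cases v; cases w) (auto simp: Xi_adj_def Xi_V_def evenlat_def)

lemma Xi_path_exists:
  assumes "x \<in> evenlat d" "N \<ge> 1"
  shows "\<exists>\<pi>. Xi_path d N \<pi> \<and> hd \<pi> = (replicate d 0, 0) \<and> last \<pi> = (x, 0)"
proof -
  obtain ys where ys: "ys \<noteq> []" "hd ys = replicate d 0" "last ys = x" "successively nn_adj ys"
    using rtranclp_imp_successively[OF evenlat_reachable[OF assms(1)]] by blast
  have "\<forall>y\<in>set ys. y \<in> evenlat d"
    using ys by (intro successively_preserves[where R = nn_adj]) (auto simp: evenlat_def sum_list_replicate
        dest: nn_adj_parity)
  then have "Xi_path d N (map (\<lambda>y. (y, 0)) ys)"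
    using ys(1,4) assms(2) by (auto simp: Xi_path_iff Xi_V_def successively_map Xi_adj_def nn_adj_def
        elim!: successively_mono)
  with ys show ?thesis
    by (auto simp: hd_map last_map)
qed

lemma l1_norm_le_Xi_path_length:
  assumes "Xi_path d N \<pi>" "hd \<pi> = (replicate d 0, 0)" "last \<pi> = (x, k)"
  shows "l1_norm x \<le> 2 * (int (length \<pi>) - 1)"
proof -
  have "l1_norm (fst w) \<le> l1_norm (fst v) + 2"
    if "v \<in> set \<pi>" "w \<in> set \<pi>" "Xi_adj N v w" for v w
    using Xi_adj_cases[OF that(3)] that assms(1) l1_norm_le_add_l1dist[of "fst v" "fst w"]
    by (fastforce simp: Xi_path_iff)
  then have "l1_norm (fst (last \<pi>)) \<le> l1_norm (fst (hd \<pi>)) + 2 * (int (length \<pi>) - 1)"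
    using assms(1) by (intro successively_last_le[where R = "Xi_adj N"]) (auto simp: Xi_path_iff)
  with assms(2,3) show ?thesis
    by simp
qed

definition path_cost :: "(int list \<times> nat \<Rightarrow> bool) \<Rightarrow> (int list \<times> nat) list \<Rightarrow> real" where
  "path_cost \<eta> \<pi> = sum_list (map (\<lambda>i. if \<eta> i then 1 else 0) \<pi>)"

lemma path_cost_nonneg: "0 \<le> path_cost \<eta> \<pi>"
  by (auto simp: path_cost_def intro!: sum_list_nonneg)

lemma sum_set_le_sum_list:
  fixes f :: "'a \<Rightarrow> 'b :: ordered_comm_monoid_add"
  assumes "\<And>x. 0 \<le> f x"
  shows "sum f (set xs) \<le> sum_list (map f xs)"
proof (induction xs)
  case (Cons x xs)
  have "sum f (set (x # xs)) \<le> f x + sum f (set xs)"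
    using assms[of x] by (simp add: sum.insert_if add_increasing)
  with Cons show ?case
    by (simp add: add_left_mono order_trans)
qed simp

lemma path_cost_distinct_le:
  assumes "distinct ys" "set ys \<subseteq> set xs"
  shows "path_cost \<eta> ys \<le> path_cost \<eta> xs"
proof -
  let ?f = "\<lambda>i. if \<eta> i then 1 else 0 :: real"
  have "path_cost \<eta> ys = sum ?f (set ys)"
    using assms(1) by (simp add: path_cost_def sum_list_distinct_conv_sum_set)
  also have "\<dots> \<le> sum ?f (set xs)"
    using assms(2) by (intro sum_mono2) auto
  also have "\<dots> \<le> path_cost \<eta> xs"
    unfolding path_cost_def by (rule sum_set_le_sum_list) simp
  finally show ?thesis .
qed

lemma path_cost_add_card_zeros:
  "distinct \<sigma> \<Longrightarrow> path_cost \<eta> \<sigma> + card {v \<in> set \<sigma>. \<not> \<eta> v} = length \<sigma>"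
proof (induction \<sigma>)
  case (Cons a \<sigma>)
  have "{v \<in> set (a # \<sigma>). \<not> \<eta> v} =
      (if \<eta> a then {v \<in> set \<sigma>. \<not> \<eta> v} else insert a {v \<in> set \<sigma>. \<not> \<eta> v})"
    by auto
  with Cons show ?case
    by (auto simp: path_cost_def card_insert_disjoint)
qed (simp add: path_cost_def)

lemma passage_time_less_iff:
  assumes "x \<in> evenlat d" "N \<ge> 1"
  shows "passage_time d N \<eta> x < c \<longleftrightarrow>
    (\<exists>\<pi>. Xi_path d N \<pi> \<and> hd \<pi> = (replicate d 0, 0) \<and> last \<pi> = (x, 0) \<and> path_cost \<eta> \<pi> < c)"
proof -
  let ?S = "{path_cost \<eta> \<pi> | \<pi>. Xi_path d N \<pi> \<and> hd \<pi> = (replicate d 0, 0) \<and> last \<pi> = (x, 0)}"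
  have "?S \<noteq> {}"
    using Xi_path_exists[OF assms] by blast
  moreover have "bdd_below ?S"
    using path_cost_nonneg by (intro bdd_belowI[of _ 0]) auto
  moreover have "passage_time d N \<eta> x = Inf ?S"
    by (simp add: passage_time_def path_cost_def)
  ultimately show ?thesis
    by (auto simp: cInf_less_iff)
qed

lemma passage_time_less_distinct:
  assumes "x \<in> evenlat d" "N \<ge> 1" "passage_time d N \<eta> x < c"
  obtains \<pi> where "Xi_path d N \<pi>" "hd \<pi> = (replicate d 0, 0)" "last \<pi> = (x, 0)" "distinct \<pi>"
    "path_cost \<eta> \<pi> < c"
proof -
  obtain \<pi>0 where \<pi>0: "Xi_path d N \<pi>0" "hd \<pi>0 = (replicate d 0, 0)" "last \<pi>0 = (x, 0)"
    "path_cost \<eta> \<pi>0 < c"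
    using assms passage_time_less_iff by blast
  then obtain \<pi> where "\<pi> \<noteq> []" "distinct \<pi>" "successively (Xi_adj N) \<pi>" "hd \<pi> = hd \<pi>0"
    "last \<pi> = last \<pi>0" "set \<pi> \<subseteq> set \<pi>0"
    using successively_distinct_sublist[of "Xi_adj N" \<pi>0] by (auto simp: Xi_path_iff)
  with \<pi>0 path_cost_distinct_le[of \<pi> \<pi>0 \<eta>] show ?thesis
    by (intro that[of \<pi>]) (auto simp: Xi_path_iff)
qed

section \<open>Counting walks from the origin\<close>

definition shift :: "int list \<Rightarrow> int list \<times> nat \<Rightarrow> int list \<times> nat" where
  "shift \<delta> v = (map2 (+) (fst v) \<delta>, snd v)"

definition layer_up :: "nat \<Rightarrow> int list \<times> nat \<Rightarrow> int list \<times> nat" where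
  "layer_up N v = (fst v, (snd v + 1) mod N)"

definition layer_down :: "nat \<Rightarrow> int list \<times> nat \<Rightarrow> int list \<times> nat" where
  "layer_down N v = (fst v, (snd v + N - 1) mod N)"

definition small_shifts :: "nat \<Rightarrow> int list set" where
  "small_shifts d = {\<delta>. set \<delta> \<subseteq> {-2..2} \<and> length \<delta> = d}"

definition Xi_moves :: "nat \<Rightarrow> nat \<Rightarrow> (int list \<times> nat \<Rightarrow> int list \<times> nat) set" where
  "Xi_moves d N = shift ` small_shifts d \<union> {layer_up N, layer_down N}"

lemma finite_Xi_moves: "finite (Xi_moves d N)"
  by (simp add: Xi_moves_def small_shifts_def finite_lists_length_eq)

lemma card_Xi_moves_le: "card (Xi_moves d N) \<le> 5 ^ d + 2"
proof -
  have "card (shift ` small_shifts d) \<le> 5 ^ d"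
    using card_image_le[of "small_shifts d" shift]
    by (simp add: small_shifts_def finite_lists_length_eq card_lists_length_eq)
  moreover have "card {layer_up N, layer_down N} \<le> 2"
    by (simp add: card_insert_le_m1)
  ultimately show ?thesis
    unfolding Xi_moves_def using card_Un_le le_trans add_mono by blast
qed

lemma map2_add_diff: "length (x :: int list) = length y \<Longrightarrow> map2 (+) x (map2 (\<lambda>a b. b - a) x y) = y"
  by (induction x y rule: list_induct2) auto

lemma Xi_adj_imp_move:
  assumes "Xi_adj N v w" "v \<in> Xi_V d N" "w \<in> Xi_V d N"
  shows "\<exists>f\<in>Xi_moves d N. w = f v"
proof -
  obtain x k y l where v: "v = (x, k)" and w: "w = (y, l)"
    by fastforce
  have "l < N" "length x = d" "length y = d"
    using assms(2,3) v w by (auto simp: Xi_V_def evenlat_def)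
  from Xi_adj_cases[OF assms] v w
  consider "x = y" "k = (l + 1) mod N" | "x = y" "l = (k + 1) mod N" | "k = l" "l1dist x y = 2"
    by auto
  then show ?thesis
  proof cases
    case 1
    with \<open>l < N\<close> have "l = (k + N - 1) mod N"
    proof (cases "l + 1 < N")
      case False
      with \<open>l < N\<close> have "l + 1 = N"
        by simp
      with 1 show ?thesis
        by simp
    qed simp
    with 1 v w have "w = layer_down N v"
      by (simp add: layer_down_def)
    then show ?thesis
      by (auto simp: Xi_moves_def)
  next
    case 2
    with v w have "w = layer_up N v"
      by (simp add: layer_up_def)
    then show ?thesis
      by (auto simp: Xi_moves_def)
  next
    case 3
    let ?\<delta> = "map2 (\<lambda>a b. b - a) x y"
    have "\<bar>a - b\<bar> \<le> 2" if "(a, b) \<in> set (zip x y)" for a b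
      using abs_diff_le_l1dist[OF _ that] \<open>length x = d\<close> \<open>length y = d\<close> 3 by simp
    then have "?\<delta> \<in> small_shifts d"
      using \<open>length x = d\<close> \<open>length y = d\<close> by (fastforce simp: small_shifts_def)
    moreover have "w = shift ?\<delta> v"
      using v w 3 \<open>length x = d\<close> \<open>length y = d\<close> by (simp add: shift_def map2_add_diff)
    ultimately show ?thesis
      by (auto simp: Xi_moves_def)
  qed
qed

fun walk_of :: "('a \<Rightarrow> 'a) list \<Rightarrow> 'a \<Rightarrow> 'a list" where
  "walk_of [] v = [v]"
| "walk_of (f # fs) v = v # walk_of fs (f v)"

lemma length_walk_of [simp]: "length (walk_of fs v) = Suc (length fs)"
  by (induction fs arbitrary: v) auto

definition origin_walks :: "nat \<Rightarrow> nat \<Rightarrow> nat \<Rightarrow> (int list \<times> nat) list set" where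
  "origin_walks d N m = {\<sigma> \<in> (\<lambda>fs. walk_of fs (replicate d 0, 0)) `
      {fs. set fs \<subseteq> Xi_moves d N \<and> length fs = m}. set \<sigma> \<subseteq> Xi_V d N}"

lemma origin_walks_subset: "\<sigma> \<in> origin_walks d N m \<Longrightarrow> set \<sigma> \<subseteq> Xi_V d N \<and> length \<sigma> = Suc m"
  by (auto simp: origin_walks_def)

lemma finite_origin_walks: "finite (origin_walks d N m)"
  by (simp add: origin_walks_def finite_lists_length_eq finite_Xi_moves)

lemma card_origin_walks_le: "card (origin_walks d N m) \<le> (5 ^ d + 2) ^ m"
proof -
  let ?Fs = "{fs. set fs \<subseteq> Xi_moves d N \<and> length fs = m}"
  have "finite ?Fs"
    by (simp add: finite_lists_length_eq finite_Xi_moves)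
  moreover have "origin_walks d N m \<subseteq> (\<lambda>fs. walk_of fs (replicate d 0, 0)) ` ?Fs"
    by (auto simp: origin_walks_def)
  ultimately have "card (origin_walks d N m) \<le> card ?Fs"
    by (meson card_image_le card_mono finite_imageI le_trans)
  also have "\<dots> \<le> (5 ^ d + 2) ^ m"
    using card_Xi_moves_le[of d N] by (simp add: card_lists_length_eq finite_Xi_moves power_mono)
  finally show ?thesis .
qed

lemma Xi_walk_eq_walk_of:
  assumes "\<sigma> \<noteq> []" "set \<sigma> \<subseteq> Xi_V d N" "successively (Xi_adj N) \<sigma>"
  shows "\<exists>fs. set fs \<subseteq> Xi_moves d N \<and> length fs = length \<sigma> - 1 \<and> \<sigma> = walk_of fs (hd \<sigma>)"
  using assms
proof (induction \<sigma> rule: induct_list012)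
  case (2 v)
  show ?case
    by (intro exI[of _ "[]"]) simp
next
  case (3 v w \<sigma>)
  have "Xi_adj N v w" "successively (Xi_adj N) (w # \<sigma>)" "set (w # \<sigma>) \<subseteq> Xi_V d N"
    "v \<in> Xi_V d N"
    using "3.prems" by simp_all
  obtain fs where fs: "set fs \<subseteq> Xi_moves d N" "length fs = length (w # \<sigma>) - 1"
    "w # \<sigma> = walk_of fs (hd (w # \<sigma>))"
    using "3.IH"(2)[OF _ \<open>set (w # \<sigma>) \<subseteq> Xi_V d N\<close> \<open>successively (Xi_adj N) (w # \<sigma>)\<close>]
    by blast
  obtain f where "f \<in> Xi_moves d N" "w = f v"
    using Xi_adj_imp_move[OF \<open>Xi_adj N v w\<close> \<open>v \<in> Xi_V d N\<close>] \<open>set (w # \<sigma>) \<subseteq> Xi_V d N\<close>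
    by auto
  moreover have "v # w # \<sigma> = walk_of (f # fs) v"
    using fs(3) \<open>w = f v\<close> by simp
  ultimately show ?case
    using fs(1,2) by (intro exI[of _ "f # fs"]) simp
qed simp

lemma take_Xi_path_in_origin_walks:
  assumes "Xi_path d N \<pi>" "hd \<pi> = (replicate d 0, 0)" "m < length \<pi>"
  shows "take (Suc m) \<pi> \<in> origin_walks d N m"
proof -
  let ?\<sigma> = "take (Suc m) \<pi>"
  have "successively (Xi_adj N) ?\<sigma>"
    using assms(1) by (auto simp: Xi_path_iff successively_conv_nth)
  moreover have "set ?\<sigma> \<subseteq> Xi_V d N"
    using assms(1) set_take_subset[of "Suc m" \<pi>] by (auto simp: Xi_path_iff)
  moreover have "?\<sigma> \<noteq> []" "hd ?\<sigma> = (replicate d 0, 0)" "length ?\<sigma> = Suc m"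
    using assms by auto
  ultimately obtain fs where "set fs \<subseteq> Xi_moves d N" "length fs = m"
    "?\<sigma> = walk_of fs (replicate d 0, 0)"
    using Xi_walk_eq_walk_of[of ?\<sigma> d N] by auto
  with \<open>set ?\<sigma> \<subseteq> Xi_V d N\<close> show ?thesis
    unfolding origin_walks_def by blast
qed

definition walk_vertex_sets :: "nat \<Rightarrow> nat \<Rightarrow> nat \<Rightarrow> nat \<Rightarrow> (int list \<times> nat) set set" where
  "walk_vertex_sets d N m r = (\<Union>\<sigma>\<in>origin_walks d N m. {S. S \<subseteq> set \<sigma> \<and> card S = r})"

lemma walk_vertex_sets_subset:
  "S \<in> walk_vertex_sets d N m r \<Longrightarrow> S \<subseteq> Xi_V d N \<and> finite S \<and> card S = r"
  unfolding walk_vertex_sets_def using origin_walks_subset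
  by (metis (mono_tags, lifting) List.finite_set UN_E finite_subset mem_Collect_eq order_trans)

lemma finite_walk_vertex_sets: "finite (walk_vertex_sets d N m r)"
  unfolding walk_vertex_sets_def using finite_origin_walks by simp

lemma card_walk_vertex_sets_le: "card (walk_vertex_sets d N m r) \<le> (5 ^ d + 2) ^ m * 2 ^ Suc m"
proof -
  have "card {S. S \<subseteq> set \<sigma> \<and> card S = r} \<le> 2 ^ Suc m" if "\<sigma> \<in> origin_walks d N m" for \<sigma>
  proof -
    have "card {S. S \<subseteq> set \<sigma> \<and> card S = r} = card (set \<sigma>) choose r"
      by (simp add: n_subsets)
    also have "\<dots> \<le> 2 ^ card (set \<sigma>)"
      by (rule binomial_le_pow2)
    also have "\<dots> \<le> 2 ^ Suc m"
      using card_length[of \<sigma>] origin_walks_subset[OF that] by (intro power_increasing) auto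
    finally show ?thesis .
  qed
  then have "card (walk_vertex_sets d N m r) \<le> (\<Sum>\<sigma>\<in>origin_walks d N m. 2 ^ Suc m)"
    unfolding walk_vertex_sets_def
    by (intro order_trans[OF card_UN_le[OF finite_origin_walks]] sum_mono)
  also have "\<dots> \<le> (5 ^ d + 2) ^ m * 2 ^ Suc m"
    using card_origin_walks_le[of d N m] by simp
  finally show ?thesis .
qed

lemma cheap_passage_has_zero_set:
  assumes "x \<in> evenlat d" "N \<ge> 1" "l1_norm x = 2 * int m"
    and "passage_time d N \<eta> x < 1 / 4 * eucl_norm x"
  shows "\<exists>S\<in>walk_vertex_sets d N m (m div 2). \<forall>v\<in>S. \<not> \<eta> v"
proof -
  have "1 / 4 * eucl_norm x \<le> real m / 2"
    using eucl_norm_le_l1_norm[of x] assms(3) by simp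
  then obtain \<pi> where \<pi>: "Xi_path d N \<pi>" "hd \<pi> = (replicate d 0, 0)" "last \<pi> = (x, 0)"
    "distinct \<pi>" "path_cost \<eta> \<pi> < real m / 2"
    using passage_time_less_distinct[OF assms(1,2,4)] by (metis order_less_le_trans)
  have "m < length \<pi>"
    using l1_norm_le_Xi_path_length[OF \<pi>(1-3)] assms(3) by simp
  define \<sigma> where "\<sigma> = take (Suc m) \<pi>"
  have \<sigma>: "\<sigma> \<in> origin_walks d N m" "distinct \<sigma>" "length \<sigma> = Suc m"
    using take_Xi_path_in_origin_walks[OF \<pi>(1,2) \<open>m < length \<pi>\<close>] \<pi>(4) \<open>m < length \<pi>\<close>
    by (auto simp: \<sigma>_def)
  let ?Z = "{v \<in> set \<sigma>. \<not> \<eta> v}"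
  have "path_cost \<eta> \<sigma> \<le> path_cost \<eta> \<pi>"
    using \<sigma>(2) by (intro path_cost_distinct_le) (auto simp: \<sigma>_def dest: in_set_takeD)
  moreover have "path_cost \<eta> \<sigma> + card ?Z = Suc m"
    using path_cost_add_card_zeros[OF \<sigma>(2)] \<sigma>(3) by simp
  ultimately have "m div 2 \<le> card ?Z"
    using \<pi>(5) by linarith
  then obtain S where "S \<subseteq> ?Z" "card S = m div 2"
    by (meson obtain_subset_with_card_n)
  with \<sigma>(1) show ?thesis
    unfolding walk_vertex_sets_def by blast
qed

section \<open>The union bound\<close>

lemma geometric_bound:
  fixes D q :: real
  assumes "D \<ge> 1" "0 \<le> q" "q \<le> 1 / (16 * D\<^sup>2)"
  shows "D ^ m * 2 ^ m * q ^ (m div 2) \<le> 4 * D * (1 / 2) ^ m"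
proof -
  define s where "s = 4 * D"
  have s: "s \<ge> 4" "1 / s \<le> 1"
    using assms(1) by (simp_all add: s_def)
  have "q ^ (m div 2) \<le> (1 / s\<^sup>2) ^ (m div 2)"
    using assms by (intro power_mono) (simp_all add: s_def power_mult_distrib)
  also have "\<dots> = (1 / s) ^ (2 * (m div 2))"
    by (simp add: power_mult power_divide)
  also have "\<dots> = s * (1 / s) ^ Suc (2 * (m div 2))"
    using s by simp
  also have "\<dots> \<le> s * (1 / s) ^ m"
    using s by (intro mult_left_mono power_decreasing) auto
  finally have "(2 * D) ^ m * q ^ (m div 2) \<le> (2 * D) ^ m * (s * (1 / s) ^ m)"
    using assms(1) by (intro mult_left_mono) auto
  also have "\<dots> = s * (2 * D / s) ^ m"
    by (simp add: power_divide)
  also have "2 * D / s = 1 / 2"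
    using assms(1) by (simp add: s_def)
  finally show ?thesis
    by (simp add: s_def power_mult_distrib ac_simps)
qed

lemma half_power_le_exp:
  assumes "0 \<le> t" "t \<le> 2 * real m"
  shows "(1 / 2 :: real) ^ m \<le> exp (- (ln 2 / 2) * t)"
proof -
  have "(1 / 2 :: real) ^ m = exp (- ln 2) ^ m"
    by (simp add: exp_minus)
  also have "\<dots> = exp (real m * - ln 2)"
    by (rule exp_of_nat_mult[symmetric])
  also have "\<dots> \<le> exp (- (ln 2 / 2) * t)"
    using assms by (simp add: mult_left_mono)
  finally show ?thesis .
qed

context
  fixes d N :: nat and p :: real
  assumes p: "0 \<le> p" "p \<le> 1"
begin

interpretation product_prob_space "\<lambda>_. measure_pmf (bernoulli_pmf p)" "Xi_V d N"
  by unfold_locales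

lemma prob_space_config_measure: "prob_space (config_measure d N p)"
  unfolding config_measure_def by (rule prob_space_PiM) (rule prob_space_measure_pmf)

lemma measurable_path_cost:
  assumes "set \<pi> \<subseteq> Xi_V d N"
  shows "(\<lambda>\<eta>. path_cost \<eta> \<pi>) \<in> borel_measurable (config_measure d N p)"
proof -
  have "(\<lambda>\<eta>. \<eta> a) \<in> measurable (config_measure d N p) (count_space UNIV)" if "a \<in> Xi_V d N" for a
    using measurable_component_singleton[OF that, of "\<lambda>_. measure_pmf (bernoulli_pmf p)"]
    by (simp add: config_measure_def measurable_cong_sets)
  then show ?thesis
    using assms unfolding path_cost_def by (induction \<pi>) (auto intro!: borel_measurable_add)
qed

lemma sets_passage_time_less:
  assumes "x \<in> evenlat d" "N \<ge> 1"
  shows "{\<eta> \<in> space (config_measure d N p). passage_time d N \<eta> x < c} \<in> sets (config_measure d N p)"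
proof -
  let ?M = "config_measure d N p"
  let ?P = "{\<pi>. Xi_path d N \<pi> \<and> hd \<pi> = (replicate d 0, 0) \<and> last \<pi> = (x, 0)}"
  have "{\<eta> \<in> space ?M. path_cost \<eta> \<pi> < c} \<in> sets ?M" if "\<pi> \<in> ?P" for \<pi>
    using that measurable_path_cost[of \<pi>] by (auto simp: Xi_path_iff)
  moreover have "countable ?P"
    by (rule countable_subset[OF subset_UNIV countableI_type])
  ultimately have "{\<eta> \<in> space ?M. \<exists>\<pi>\<in>?P. path_cost \<eta> \<pi> < c} \<in> sets ?M"
    by (intro sets.sets_Collect_countable_Ex') auto
  moreover have "{\<eta> \<in> space ?M. passage_time d N \<eta> x < c} = {\<eta> \<in> space ?M. \<exists>\<pi>\<in>?P. path_cost \<eta> \<pi> < c}"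
    using passage_time_less_iff[OF assms] by auto
  ultimately show ?thesis
    by simp
qed

lemma sets_all_false:
  "S \<subseteq> Xi_V d N \<Longrightarrow> finite S \<Longrightarrow> {\<eta> \<in> space (config_measure d N p). \<forall>i\<in>S. \<not> \<eta> i} \<in> sets (config_measure d N p)"
  unfolding config_measure_def
  by (intro sets.sets_Collect_finite_All) (auto intro!: sets_Collect_single')

lemma measure_all_false:
  assumes "S \<subseteq> Xi_V d N" "finite S"
  shows "measure (config_measure d N p) {\<eta> \<in> space (config_measure d N p). \<forall>i\<in>S. \<not> \<eta> i} = (1 - p) ^ card S"
proof -
  have "emeasure (config_measure d N p) {\<eta> \<in> space (config_measure d N p). \<forall>i\<in>S. \<eta> i \<in> {False}}
      = (\<Prod>i\<in>S. emeasure (measure_pmf (bernoulli_pmf p)) {False})"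
    unfolding config_measure_def using assms by (intro emeasure_PiM_Collect) auto
  also have "\<dots> = ennreal ((1 - p) ^ card S)"
    using p by (simp add: emeasure_pmf_single prod_ennreal[symmetric] ennreal_power)
  finally show ?thesis
    using p by (simp add: measure_def)
qed

lemma measure_walk_zero_set_le:
  "measure (config_measure d N p)
     (\<Union>S\<in>walk_vertex_sets d N m r. {\<eta> \<in> space (config_measure d N p). \<forall>i\<in>S. \<not> \<eta> i})
   \<le> (5 ^ d + 2) ^ m * 2 ^ Suc m * (1 - p) ^ r"
proof -
  let ?M = "config_measure d N p" and ?W = "walk_vertex_sets d N m r"
  have "measure ?M (\<Union>S\<in>?W. {\<eta> \<in> space ?M. \<forall>i\<in>S. \<not> \<eta> i})
      \<le> (\<Sum>S\<in>?W. measure ?M {\<eta> \<in> space ?M. \<forall>i\<in>S. \<not> \<eta> i})"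
    using walk_vertex_sets_subset by (intro measure_UNION_le finite_walk_vertex_sets sets_all_false) auto
  also have "\<dots> = card ?W * (1 - p) ^ r"
    using walk_vertex_sets_subset measure_all_false by simp
  also have "\<dots> \<le> (5 ^ d + 2) ^ m * 2 ^ Suc m * (1 - p) ^ r"
  proof (rule mult_right_mono)
    show "real (card ?W) \<le> (5 ^ d + 2) ^ m * 2 ^ Suc m"
      using of_nat_mono[OF card_walk_vertex_sets_le[of d N m r], where 'a = real]
      by (simp add: add.commute)
  qed (use p in simp)
  finally show ?thesis .
qed

lemma measure_passage_time_less_le:
  assumes "x \<in> evenlat d" "N \<ge> 1" "1 - p \<le> 1 / (16 * (5 ^ d + 2)\<^sup>2)"
  shows "measure (config_measure d N p)
      {\<eta> \<in> space (config_measure d N p). passage_time d N \<eta> x < 1 / 4 * eucl_norm x}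
    \<le> 8 * (5 ^ d + 2) * exp (- (ln 2 / 2) * eucl_norm x)"
proof -
  let ?M = "config_measure d N p"
  let ?Z = "\<lambda>S. {\<eta> \<in> space ?M. \<forall>i\<in>S. \<not> \<eta> i}"
  define D :: real where "D = 5 ^ d + 2"
  interpret prob_space ?M
    by (rule prob_space_config_measure)
  obtain m where m: "l1_norm x = 2 * int m"
    using evenlat_l1_norm_eq_double[OF assms(1)] .
  have norm_le: "eucl_norm x \<le> 2 * real m"
    using eucl_norm_le_l1_norm[of x] m by simp
  have incl: "{\<eta> \<in> space ?M. passage_time d N \<eta> x < 1 / 4 * eucl_norm x}
      \<subseteq> (\<Union>S\<in>walk_vertex_sets d N m (m div 2). ?Z S)"
    using cheap_passage_has_zero_set[OF assms(1,2) m] by blast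
  have "(\<Union>S\<in>walk_vertex_sets d N m (m div 2). ?Z S) \<in> sets ?M"
    using walk_vertex_sets_subset by (intro sets.finite_UN finite_walk_vertex_sets sets_all_false) auto
  with incl have "measure ?M {\<eta> \<in> space ?M. passage_time d N \<eta> x < 1 / 4 * eucl_norm x}
      \<le> measure ?M (\<Union>S\<in>walk_vertex_sets d N m (m div 2). ?Z S)"
    by (rule finite_measure_mono)
  also have "\<dots> \<le> D ^ m * 2 ^ Suc m * (1 - p) ^ (m div 2)"
    using measure_walk_zero_set_le[of m "m div 2"] by (simp add: D_def)
  also have "\<dots> = 2 * (D ^ m * 2 ^ m * (1 - p) ^ (m div 2))"
    by simp
  also have "\<dots> \<le> 2 * (4 * D * (1 / 2) ^ m)"
    using assms(3) p by (intro mult_left_mono geometric_bound) (simp_all add: D_def)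
  also have "\<dots> = 8 * D * (1 / 2) ^ m"
    by simp
  also have "\<dots> \<le> 8 * D * exp (- (ln 2 / 2) * eucl_norm x)"
    using half_power_le_exp[OF eucl_norm_nonneg norm_le] by (intro mult_left_mono) (auto simp: D_def)
  finally show ?thesis
    by (simp add: D_def)
qed

end

theorem lemma3p2:
  fixes d :: nat
  assumes "d \<ge> 1"
  shows "\<exists>\<kappa>>0. \<forall>p::real. 1 - \<kappa> < p \<and> p \<le> 1 \<longrightarrow>
    (\<exists>\<phi>>0. \<exists>c1>0. \<exists>c2>0. \<forall>N::nat. N \<ge> 1 \<longrightarrow>
      (\<forall>x\<in>evenlat d.
        {\<eta> \<in> space (config_measure d N p). passage_time d N \<eta> x < \<phi> * eucl_norm x}
          \<in> sets (config_measure d N p) \<and>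
        measure (config_measure d N p)
          {\<eta> \<in> space (config_measure d N p). passage_time d N \<eta> x < \<phi> * eucl_norm x}
          \<le> c1 * exp (- c2 * eucl_norm x)))"
proof (rule exI[of _ "1 / (16 * (5 ^ d + 2)\<^sup>2)"], intro conjI allI impI)
  have D: "(1 :: real) \<le> (5 ^ d + 2)\<^sup>2"
    using one_le_power[of "5 :: real" d] by (intro one_le_power) linarith
  then show "0 < 1 / (16 * (5 ^ d + 2)\<^sup>2 :: real)"
    by (intro divide_pos_pos) linarith+
  fix p :: real
  assume "1 - 1 / (16 * (5 ^ d + 2)\<^sup>2) < p \<and> p \<le> 1"
  moreover have "1 / (16 * (5 ^ d + 2)\<^sup>2) \<le> (1 :: real)"
    using D by (subst divide_le_eq_1_pos) linarith+
  ultimately have p: "0 \<le> p" "p \<le> 1" "1 - p \<le> 1 / (16 * (5 ^ d + 2)\<^sup>2)"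
    by linarith+
  have "(0 :: real) < 8 * (5 ^ d + 2)"
    by (intro mult_pos_pos add_pos_pos) simp_all
  moreover have "(0 :: real) < 1 / 4" "(0 :: real) < ln 2 / 2"
    by simp_all
  ultimately show "\<exists>\<phi>>0. \<exists>c1>0. \<exists>c2>0. \<forall>N::nat. N \<ge> 1 \<longrightarrow>
      (\<forall>x\<in>evenlat d.
        {\<eta> \<in> space (config_measure d N p). passage_time d N \<eta> x < \<phi> * eucl_norm x}
          \<in> sets (config_measure d N p) \<and>
        measure (config_measure d N p)
          {\<eta> \<in> space (config_measure d N p). passage_time d N \<eta> x < \<phi> * eucl_norm x}
          \<le> c1 * exp (- c2 * eucl_norm x))"
    using sets_passage_time_less[OF p(1,2)] measure_passage_time_less_le[OF p(1,2) _ _ p(3)]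
    by blast
qed

end
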